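(* Let $H$ be a real symmetric positive definite $d\times d$ matrix and $L$ a real $d\times d$ matrix with $L^TH+HL=0$. Let $s>1$ be odd and consider the $s$-stage explicit Runge–Kutta method applied to $\frac{d}{dt}u=Lu$, $u_{n+1}=G_s u_n$ with $G_s=\sum_{k=0}^s a_k(hL)^k$, $a_0=1$, where $a_k=\frac{1}{k!}$ for $k=1,\dots,s-1$ and $a_s=\frac{1}{s!}-\frac{1}{(s+1)!}$. Then the method has order $p=s-1$ and order of energy accuracy $r=s+2$.
   Context: The order $p$ of the method is the largest integer such that $a_k=1/k!$ for all $1\le k\le p$. For $0\le k\le s$, $b_k=\sum_{i=\max(0,2k-s)}^{\min(2k,s)}(-1)^{k+i}a_i a_{2k-i}$, so that the energy $\mathcal{E}=\tfrac12\langle u,Hu\rangle$ satisfies $\mathcal{E}_{n+1}=\mathcal{E}_n+\tfrac12\sum_{k=1}^s b_k h^{2k}\|L^k u_n\|_H^2$. The leading index $m$ is the smallest $k\ge1$ with $b_k\ne0$ and the order of energy accuracy is $r=2m-1$. *)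

theory Defs
  imports "HOL-Analysis.Analysis"
begin

text \<open>Coefficients a_0..a_s of the stability polynomial G_s = sum a_k (hL)^k of the
  s-stage method in the statement; a_k = 0 for k > s (G_s has degree s).\<close>
definition rk_coeffs :: "nat \<Rightarrow> nat \<Rightarrow> real" where
  "rk_coeffs s k =
     (if k = 0 then 1
      else if k < s then 1 / fact k
      else if k = s then 1 / fact s - 1 / fact (s + 1)
      else 0)"

definition method_order :: "(nat \<Rightarrow> real) \<Rightarrow> nat" where
  "method_order a = (GREATEST p. \<forall>k. 1 \<le> k \<and> k \<le> p \<longrightarrow> a k = 1 / fact k)"

definition energy_coeff :: "(nat \<Rightarrow> real) \<Rightarrow> nat \<Rightarrow> nat \<Rightarrow> real" where
  "energy_coeff a s k = (\<Sum>i = 2 * k - s .. min (2 * k) s. (-1) ^ (k + i) * a i * a (2 * k - i))"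

definition energy_leading_index :: "(nat \<Rightarrow> real) \<Rightarrow> nat \<Rightarrow> nat" where
  "energy_leading_index a s = (LEAST k. 1 \<le> k \<and> k \<le> s \<and> energy_coeff a s k \<noteq> 0)"

definition energy_order :: "(nat \<Rightarrow> real) \<Rightarrow> nat \<Rightarrow> nat" where
  "energy_order a s = 2 * energy_leading_index a s - 1"

end

theory Submission
  imports Defs
begin

text \<open>
  Put G(z) = \<Sum>_k a_k z^k; then (-1)^k b_k is the coefficient of z^(2k) in G(-z) G(z), and
  alternating_convolution x y n is the coefficient of z^n in X(-z) Y(z).
  Write G(z) = e^z - D(z), where D(z) = z^s/(s+1)! + \<Sum>_(i>s) z^i/i! has the coefficients
  rk_defect s. Since e^(-z) e^z = 1 and D(-z) D(z) = O(z^(2s)), for 0 < k < s the coefficient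
  (-1)^k b_k is -2 times the coefficient of z^(2k) in e^(-z) D(z). That series starts at z^s,
  its coefficient of z^(s+1) cancels, and that of z^(s+3) is s/(3(s+3)(s+1)!) \<noteq> 0.
  Hence m = (s+3)/2 and r = s+2; for s = 3, where s+3 = 2s, b_3 is computed directly.
\<close>

definition alternating_convolution ::
    "(nat \<Rightarrow> 'a::comm_ring_1) \<Rightarrow> (nat \<Rightarrow> 'a) \<Rightarrow> nat \<Rightarrow> 'a" where
  "alternating_convolution x y n = (\<Sum>i\<le>n. (-1) ^ i * x i * y (n - i))"

lemma alternating_convolution_diff:
  "alternating_convolution (\<lambda>i. x i - y i) (\<lambda>i. x i - y i) n =
     alternating_convolution x x n - alternating_convolution x y n
     - alternating_convolution y x n + alternating_convolution y y n"
  by (simp add: alternating_convolution_def algebra_simps sum.distrib sum_subtractf)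

lemma alternating_convolution_commute_even:
  assumes "even n"
  shows "alternating_convolution y x n = alternating_convolution x y n"
  unfolding alternating_convolution_def atMost_atLeast0
  by (subst sum.atLeastAtMost_rev) (auto intro!: sum.cong simp: assms minus_one_power_iff)

lemma alternating_convolution_eq_0_below_supports:
  assumes "\<And>i. i < m \<Longrightarrow> x i = 0" "\<And>j. j < m' \<Longrightarrow> y j = 0" "n < m + m'"
  shows "alternating_convolution x y n = 0"
  unfolding alternating_convolution_def
proof (rule sum.neutral, intro ballI)
  fix i assume "i \<in> {..n}"
  show "(-1) ^ i * x i * y (n - i) = 0"
  proof (cases "i < m")
    case True
    then show ?thesis by (simp add: assms(1))
  next
    case False
    then have "n - i < m'" using assms(3) \<open>i \<in> {..n}\<close> by auto
    then show ?thesis by (simp add: assms(2))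
  qed
qed

lemma alternating_convolution_exp_coeffs:
  assumes "n > 0"
  shows "alternating_convolution (\<lambda>i. 1 / fact i) (\<lambda>i. 1 / fact i) n = (0::'a::field_char_0)"
proof -
  have "alternating_convolution (\<lambda>i. 1 / fact i) (\<lambda>i. 1 / fact i) n
      = (\<Sum>i\<le>n. (-1) ^ i * of_nat (n choose i)) / (fact n :: 'a)"
    by (simp add: alternating_convolution_def sum_divide_distrib binomial_fact)
  also have "\<dots> = 0"
    using choose_alternating_sum[OF assms] by simp
  finally show ?thesis .
qed

lemma energy_coeff_eq_alternating_convolution:
  assumes "\<And>i. s < i \<Longrightarrow> a i = 0"
  shows "energy_coeff a s k = (-1) ^ k * alternating_convolution a a (2 * k)"
proof -
  have "energy_coeff a s k = (\<Sum>i\<le>2 * k. (-1) ^ (k + i) * a i * a (2 * k - i))"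
    unfolding energy_coeff_def
    by (rule sum.mono_neutral_left) (auto simp: assms)
  then show ?thesis
    by (simp add: alternating_convolution_def power_add sum_distrib_left mult.assoc)
qed

definition rk_defect :: "nat \<Rightarrow> nat \<Rightarrow> real" where
  "rk_defect s i = 1 / fact i - rk_coeffs s i"

lemma rk_defect_eq:
  assumes "0 < s"
  shows "rk_defect s i = (if i < s then 0 else if i = s then 1 / fact (s + 1) else 1 / fact i)"
  using assms by (simp add: rk_defect_def rk_coeffs_def)

lemma alternating_convolution_exp_rk_defect:
  assumes "0 < s" "s \<le> n"
  shows "alternating_convolution (\<lambda>i. 1 / fact i) (rk_defect s) n
       = (\<Sum>i\<le>n - s. (-1) ^ i / fact i * rk_defect s (n - i))"
  unfolding alternating_convolution_def
  by (rule sum.mono_neutral_cong_right) (use assms in \<open>auto simp: rk_defect_eq\<close>)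

lemma alternating_convolution_exp_rk_defect_plus_1:
  assumes "0 < s"
  shows "alternating_convolution (\<lambda>i. 1 / fact i) (rk_defect s) (s + 1) = 0"
  using assms by (simp add: alternating_convolution_exp_rk_defect rk_defect_eq)

lemma alternating_convolution_exp_rk_defect_plus_3:
  assumes "0 < s"
  shows "alternating_convolution (\<lambda>i. 1 / fact i) (rk_defect s) (s + 3)
       = s / (3 * (s + 3)) / fact (s + 1)"
proof -
  define F where "F = (fact (s + 1) :: real)"
  have fact_s2: "fact (s + 2) = (s + 2) * F"
    and fact_s3: "fact (s + 3) = (s + 3) * ((s + 2) * F)"
    unfolding F_def by (simp_all add: numeral_3_eq_3 numeral_2_eq_2 add_ac)
  have "real s + 2 \<noteq> 0" "real s + 3 \<noteq> 0"
    by linarith+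
  then have partial_fractions:
    "1 / ((real s + 3) * (real s + 2)) - 1 / (real s + 2) + 1 / 2 - 1 / 6 = s / (3 * (real s + 3))"
    by (simp add: divide_simps) (simp add: algebra_simps)
  have "alternating_convolution (\<lambda>i. 1 / fact i) (rk_defect s) (s + 3)
      = 1 / fact (s + 3) - 1 / fact (s + 2) + 1 / (2 * F) - 1 / (6 * F)"
    using assms by (simp add: alternating_convolution_exp_rk_defect rk_defect_eq F_def
        numeral_3_eq_3 numeral_2_eq_2)
  also have "\<dots> = (1 / ((real s + 3) * (real s + 2)) - 1 / (real s + 2) + 1 / 2 - 1 / 6) / F"
    unfolding fact_s2 fact_s3
    by (simp add: diff_divide_distrib add_divide_distrib mult.assoc add_ac)
  finally show ?thesis
    unfolding partial_fractions F_def .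
qed

lemma energy_coeff_rk_coeffs:
  assumes "0 < k" "k < s"
  shows "energy_coeff (rk_coeffs s) s k
       = - 2 * (-1) ^ k * alternating_convolution (\<lambda>i. 1 / fact i) (rk_defect s) (2 * k)"
proof -
  let ?e = "\<lambda>i. 1 / fact i :: real"
  have coeffs_eq: "rk_coeffs s = (\<lambda>i. ?e i - rk_defect s i)"
    by (simp add: rk_defect_def)
  have "alternating_convolution ?e ?e (2 * k) = 0"
    using assms by (simp add: alternating_convolution_exp_coeffs)
  moreover have "alternating_convolution (rk_defect s) (rk_defect s) (2 * k) = 0"
    by (rule alternating_convolution_eq_0_below_supports[of s _ s])
      (use assms in \<open>simp_all add: rk_defect_eq\<close>)
  moreover have "alternating_convolution (rk_defect s) ?e (2 * k)
      = alternating_convolution ?e (rk_defect s) (2 * k)"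
    by (simp add: alternating_convolution_commute_even)
  ultimately have "alternating_convolution (rk_coeffs s) (rk_coeffs s) (2 * k)
      = - 2 * alternating_convolution ?e (rk_defect s) (2 * k)"
    unfolding coeffs_eq alternating_convolution_diff by simp
  moreover have "energy_coeff (rk_coeffs s) s k
      = (-1) ^ k * alternating_convolution (rk_coeffs s) (rk_coeffs s) (2 * k)"
    by (rule energy_coeff_eq_alternating_convolution) (simp add: rk_coeffs_def)
  ultimately show ?thesis by simp
qed

lemma energy_coeff_rk_coeffs_eq_0:
  assumes "odd s" "1 < s" "0 < k" "2 * k \<le> s + 1"
  shows "energy_coeff (rk_coeffs s) s k = 0"
proof -
  have "alternating_convolution (\<lambda>i. 1 / fact i) (rk_defect s) (2 * k) = 0"
  proof (cases "2 * k < s")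
    case True
    then show ?thesis
      by (intro alternating_convolution_eq_0_below_supports[of 0 _ s]) (simp_all add: rk_defect_eq)
  next
    case False
    with assms have "2 * k = s + 1"
      by presburger
    moreover have "alternating_convolution (\<lambda>i. 1 / fact i) (rk_defect s) (s + 1) = 0"
      using assms by (intro alternating_convolution_exp_rk_defect_plus_1) simp
    ultimately show ?thesis
      by simp
  qed
  moreover have "k < s"
    using assms by linarith
  ultimately show ?thesis
    using assms by (simp add: energy_coeff_rk_coeffs)
qed

lemma energy_coeff_rk_coeffs_neq_0:
  assumes "odd s" "1 < s" "2 * k = s + 3"
  shows "energy_coeff (rk_coeffs s) s k \<noteq> 0"
proof (cases "s = 3")
  case True
  with assms have "k = 3"
    by simp
  with \<open>s = 3\<close> show ?thesis
    by (simp add: energy_coeff_def rk_coeffs_def fact_numeral)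
next
  case False
  with assms have "k < s"
    by presburger
  moreover have "alternating_convolution (\<lambda>i. 1 / fact i) (rk_defect s) (s + 3) \<noteq> 0"
    using assms by (simp add: alternating_convolution_exp_rk_defect_plus_3)
  ultimately show ?thesis
    using assms by (simp add: energy_coeff_rk_coeffs)
qed

lemma energy_leading_index_rk_coeffs:
  assumes "odd s" "1 < s"
  shows "energy_leading_index (rk_coeffs s) s = (s + 3) div 2"
  unfolding energy_leading_index_def
proof (rule Least_equality)
  show "1 \<le> (s + 3) div 2 \<and> (s + 3) div 2 \<le> s
      \<and> energy_coeff (rk_coeffs s) s ((s + 3) div 2) \<noteq> 0"
    using assms energy_coeff_rk_coeffs_neq_0[of s "(s + 3) div 2"] by auto
next
  fix k
  assume "1 \<le> k \<and> k \<le> s \<and> energy_coeff (rk_coeffs s) s k \<noteq> 0"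
  then show "(s + 3) div 2 \<le> k"
    using assms energy_coeff_rk_coeffs_eq_0[of s k] by (cases "2 * k \<le> s + 1") auto
qed

lemma method_order_rk_coeffs:
  assumes "1 < s"
  shows "method_order (rk_coeffs s) = s - 1"
  unfolding method_order_def
proof (rule Greatest_equality)
  show "\<forall>k. 1 \<le> k \<and> k \<le> s - 1 \<longrightarrow> rk_coeffs s k = 1 / fact k"
    by (auto simp: rk_coeffs_def)
next
  fix p
  assume agree: "\<forall>k. 1 \<le> k \<and> k \<le> p \<longrightarrow> rk_coeffs s k = 1 / fact k"
  show "p \<le> s - 1"
  proof (rule ccontr)
    assume "\<not> p \<le> s - 1"
    with agree assms have "rk_coeffs s s = 1 / fact s"
      by auto
    with assms show False
      by (simp add: rk_coeffs_def)
  qed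
qed

theorem proposition3:
  fixes H L :: "real ^ 'd ^ 'd" and s :: nat
  assumes "transpose H = H"
    and "\<forall>x. x \<noteq> 0 \<longrightarrow> x \<bullet> (H *v x) > 0"
    and "transpose L ** H + H ** L = 0"
    and "s > 1" and "odd s"
  shows "method_order (rk_coeffs s) = s - 1 \<and> energy_order (rk_coeffs s) s = s + 2"
proof
  show "method_order (rk_coeffs s) = s - 1"
    using \<open>s > 1\<close> by (rule method_order_rk_coeffs)
next
  show "energy_order (rk_coeffs s) s = s + 2"
    using \<open>s > 1\<close> \<open>odd s\<close>
    by (simp add: energy_order_def energy_leading_index_rk_coeffs)
qed

end
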